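(* Let $t\ge1$ and $n=2(t+1)^2$. Let $\mathcal{C}_0\subseteq\mathbb{Z}_n^2$ be a linear $t$-error-correcting diameter perfect code with generator matrix $G_0$ and $\mathcal{C}=\mathbf{x}+\mathcal{C}_0$ for some $\mathbf{x}=(x_1,x_2)\in\mathbb{Z}_n^2$, of Case I or Case II. Let $\mathcal{S}$ be the set of diameter perfect Sudoku grids with respect to $\mathcal{C}$ and $\bar{\mathcal{S}}$ its set of relabeling classes. (i) If $\mathcal{C}$ is of Case I and $\mathcal{G}_\mathcal{S}=\langle \tau_1^{t+1}\tau_2^{t+1},\ \tau_2^{2(t+1)},\ \tau_2^{2x_2+1}s,\ \tau_1^{2x_1+2}\tau_2^{2x_2+1}r^2\rangle$, then each equivalence class (orbit) in $\bar{\mathcal{S}}$ under the action of $\mathcal{G}_\mathcal{S}$ has size dividing $4n$. (ii) If $\mathcal{C}$ is of Case II, $G_0=[a~~b]$, and $\mathcal{G}_\mathcal{S}=\langle \tau_1^{a}\tau_2^{b},\ \tau_1^{2x_1+2}\tau_2^{2x_2+1}r^2\rangle$, then each equivalence class in $\bar{\mathcal{S}}$ under the action of $\mathcal{G}_\mathcal{S}$ has size dividing $2n$.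
   Context: $\mathbb{Z}_n$ is the integers modulo $n$; Lee weight $\mathrm{wt}_L(\mathbf{u})=\sum_i\min\{u_i,n-u_i\}$, Lee distance $d_L(\mathbf{u},\mathbf{v})=\mathrm{wt}_L(\mathbf{u}-\mathbf{v})$. Linear code = submodule of $\mathbb{Z}_n^2$, generator matrix = matrix whose rows form a minimal spanning set; codes are equivalent if one is the image of the other under a coordinate permutation matrix. $\mathcal{A}_{2t+1}$: set of points within Lee distance $t$ of an adjacent pair (its core); it has $n$ points. A $t$-error-correcting diameter perfect code is a $(2t+1)$-diameter perfect code of size $n$ in $\mathbb{Z}_n^2$ with minimum distance $2t+2$ and anticode $\mathcal{A}_{2t+1}$. Case I: $\mathcal{C}_0$ equivalent to the code generated by $\begin{bmatrix}t+1&t+1\\0&2(t+1)\end{bmatrix}$; Case II: $\mathcal{C}_0$ equivalent to the code generated by $[1~~2t+1]$. For each codeword $\mathbf{c}_i$ of $\mathcal{C}=\{\mathbf{c}_1,\dots,\mathbf{c}_n\}$ take the translate $\mathcal{A}_i$ of $\mathcal{A}_{2t+1}$ with core $\{\mathbf{c}_i,\mathbf{c}_i+(1,0)\}$; the palette grid $\mathcal{I}_{\mathcal{C},\mathcal{A}}$ has entry $i$ at every position $(x,y)\in\mathcal{A}_i$ (row $x$, column $y$). A diameter perfect Sudoku grid is a Latin square of order $n$ on $[n]$ whose pairs of corresponding entries with $\mathcal{I}_{\mathcal{C},\mathcal{A}}$ are all distinct (orthogonality). Relabeling: $S_1\sim S_2$ iff $S_2$ is obtained from $S_1$ by applying a bijection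 $\sigma:[n]\to[n]$ to every entry. Maps on arrays (indices mod $n$): $(r(A))_{i,j}=A_{n-1-j,i}$, $(s(A))_{i,j}=A_{i,n-1-j}$, $(\tau_1(A))_{i,j}=A_{i-1,j}$, $(\tau_2(A))_{i,j}=A_{i,j-1}$. Elements of $\mathcal{G}_\mathcal{S}$ map $\mathcal{S}$ to $\mathcal{S}$ and commute with relabeling, hence act on $\bar{\mathcal{S}}$. *)

theory Defs
  imports Main
begin

text \<open>Elements of Z_n are represented by integers in {0..<n}; vectors of Z_n^2 by
  pairs of such integers. Grid positions (x,y) (row x, column y) are the same pairs.\<close>

definition Zn2 :: "int \<Rightarrow> (int \<times> int) set" where
  "Zn2 n = {0..<n} \<times> {0..<n}"

definition vadd :: "int \<Rightarrow> int \<times> int \<Rightarrow> int \<times> int \<Rightarrow> int \<times> int" where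
  "vadd n u v = ((fst u + fst v) mod n, (snd u + snd v) mod n)"

definition vsub :: "int \<Rightarrow> int \<times> int \<Rightarrow> int \<times> int \<Rightarrow> int \<times> int" where
  "vsub n u v = ((fst u - fst v) mod n, (snd u - snd v) mod n)"

definition lee_wt1 :: "int \<Rightarrow> int \<Rightarrow> int" where
  "lee_wt1 n u = min (u mod n) (n - u mod n)"

definition lee_wt :: "int \<Rightarrow> int \<times> int \<Rightarrow> int" where
  "lee_wt n u = lee_wt1 n (fst u) + lee_wt1 n (snd u)"

definition lee_dist :: "int \<Rightarrow> int \<times> int \<Rightarrow> int \<times> int \<Rightarrow> int" where
  "lee_dist n u v = lee_wt n (vsub n u v)"

definition linear_code :: "int \<Rightarrow> (int \<times> int) set \<Rightarrow> bool" where
  "linear_code n C \<longleftrightarrow> C \<subseteq> Zn2 n \<and> (0,0) \<in> C \<and>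
     (\<forall>u\<in>C. \<forall>v\<in>C. vadd n u v \<in> C) \<and>
     (\<forall>k::int. \<forall>u\<in>C. ((k * fst u) mod n, (k * snd u) mod n) \<in> C)"

definition row_span :: "int \<Rightarrow> (int \<times> int) list \<Rightarrow> (int \<times> int) set" where
  "row_span n M = {((\<Sum>i<length M. k i * fst (M ! i)) mod n,
                    (\<Sum>i<length M. k i * snd (M ! i)) mod n) | k :: nat \<Rightarrow> int. True}"

definition generator_matrix :: "int \<Rightarrow> (int \<times> int) set \<Rightarrow> (int \<times> int) list \<Rightarrow> bool" where
  "generator_matrix n C M \<longleftrightarrow> set M \<subseteq> Zn2 n \<and> row_span n M = C \<and>
     (\<forall>i<length M. row_span n (take i M @ drop (Suc i) M) \<noteq> C)"

text \<open>Equivalence: image under a coordinate permutation matrix (identity or swap).\<close>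
definition equiv_codes :: "(int \<times> int) set \<Rightarrow> (int \<times> int) set \<Rightarrow> bool" where
  "equiv_codes C D \<longleftrightarrow> D = C \<or> D = (\<lambda>(u,v). (v,u)) ` C"

definition anticode :: "int \<Rightarrow> int \<Rightarrow> int \<times> int \<Rightarrow> (int \<times> int) set" where
  "anticode n t c = {p \<in> Zn2 n. lee_dist n p c \<le> t \<or> lee_dist n p (vadd n c (1,0)) \<le> t}"

text \<open>t-error-correcting diameter perfect code: a (2t+1)-diameter perfect code of size n
  in Z_n^2 with minimum distance 2t+2 and anticode A_{2t+1} (|C| |A_{2t+1}| = n^2).\<close>
definition t_ec_dp_code :: "int \<Rightarrow> int \<Rightarrow> (int \<times> int) set \<Rightarrow> bool" where
  "t_ec_dp_code n t C \<longleftrightarrow> C \<subseteq> Zn2 n \<and> card C = nat n \<and>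
     card C * card (anticode n t (0,0)) = nat n ^ 2 \<and>
     (\<forall>u\<in>C. \<forall>v\<in>C. u \<noteq> v \<longrightarrow> lee_dist n u v \<ge> 2*t+2) \<and>
     (\<exists>u\<in>C. \<exists>v\<in>C. u \<noteq> v \<and> lee_dist n u v = 2*t+2)"

definition caseI :: "int \<Rightarrow> int \<Rightarrow> (int \<times> int) set \<Rightarrow> bool" where
  "caseI n t C0 \<longleftrightarrow> equiv_codes (row_span n [(t+1, t+1), (0, 2*(t+1))]) C0"

definition caseII :: "int \<Rightarrow> int \<Rightarrow> (int \<times> int) set \<Rightarrow> bool" where
  "caseII n t C0 \<longleftrightarrow> equiv_codes (row_span n [(1, 2*t+1)]) C0"

definition translate_code :: "int \<Rightarrow> int \<times> int \<Rightarrow> (int \<times> int) set \<Rightarrow> (int \<times> int) set" where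
  "translate_code n x C0 = vadd n x ` C0"

text \<open>An n x n array is a function on positions; it is normalised to 0 outside Z_n^2.\<close>
type_synonym grid = "int \<times> int \<Rightarrow> int"

definition grid_ext :: "int \<Rightarrow> grid \<Rightarrow> bool" where
  "grid_ext n A \<longleftrightarrow> (\<forall>p. p \<notin> Zn2 n \<longrightarrow> A p = 0)"

definition latin_square :: "int \<Rightarrow> grid \<Rightarrow> bool" where
  "latin_square n S \<longleftrightarrow> grid_ext n S \<and>
     (\<forall>i\<in>{0..<n}. bij_betw (\<lambda>j. S (i,j)) {0..<n} {1..n}) \<and>
     (\<forall>j\<in>{0..<n}. bij_betw (\<lambda>i. S (i,j)) {0..<n} {1..n})"

text \<open>Palette grid for the enumeration cw : [n] -> C of the codewords.\<close>
definition palette :: "int \<Rightarrow> int \<Rightarrow> (int \<Rightarrow> int \<times> int) \<Rightarrow> grid" where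
  "palette n t cw p = (THE i. i \<in> {1..n} \<and> p \<in> anticode n t (cw i))"

definition dp_sudoku :: "int \<Rightarrow> int \<Rightarrow> (int \<Rightarrow> int \<times> int) \<Rightarrow> grid \<Rightarrow> bool" where
  "dp_sudoku n t cw S \<longleftrightarrow> latin_square n S \<and>
     inj_on (\<lambda>p. (S p, palette n t cw p)) (Zn2 n)"

definition sudoku_set :: "int \<Rightarrow> int \<Rightarrow> (int \<Rightarrow> int \<times> int) \<Rightarrow> grid set" where
  "sudoku_set n t cw = {S. dp_sudoku n t cw S}"

definition relabel :: "int \<Rightarrow> (int \<Rightarrow> int) \<Rightarrow> grid \<Rightarrow> grid" where
  "relabel n \<sigma> A = (\<lambda>p. if p \<in> Zn2 n then \<sigma> (A p) else 0)"

definition relabel_class :: "int \<Rightarrow> grid \<Rightarrow> grid set" where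
  "relabel_class n S = {relabel n \<sigma> S | \<sigma>. bij_betw \<sigma> {1..n} {1..n}}"

definition rr :: "int \<Rightarrow> grid \<Rightarrow> grid" where
  "rr n A = (\<lambda>(i,j). if (i,j) \<in> Zn2 n then A ((n - 1 - j) mod n, i mod n) else 0)"

definition ss :: "int \<Rightarrow> grid \<Rightarrow> grid" where
  "ss n A = (\<lambda>(i,j). if (i,j) \<in> Zn2 n then A (i mod n, (n - 1 - j) mod n) else 0)"

definition tau1 :: "int \<Rightarrow> grid \<Rightarrow> grid" where
  "tau1 n A = (\<lambda>(i,j). if (i,j) \<in> Zn2 n then A ((i - 1) mod n, j mod n) else 0)"

definition tau2 :: "int \<Rightarrow> grid \<Rightarrow> grid" where
  "tau2 n A = (\<lambda>(i,j). if (i,j) \<in> Zn2 n then A (i mod n, (j - 1) mod n) else 0)"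

text \<open>Group generated by a set of maps (each generator has finite order on normalised
  arrays, so the generated monoid is the generated group).\<close>
inductive_set generated :: "(grid \<Rightarrow> grid) set \<Rightarrow> (grid \<Rightarrow> grid) set"
  for gens where
  gen_id: "id \<in> generated gens"
| gen_comp: "g \<in> gens \<Longrightarrow> h \<in> generated gens \<Longrightarrow> g \<circ> h \<in> generated gens"

definition GS_caseI :: "int \<Rightarrow> int \<Rightarrow> int \<times> int \<Rightarrow> (grid \<Rightarrow> grid) set" where
  "GS_caseI n t x = generated
     { (tau1 n ^^ nat (t+1)) \<circ> (tau2 n ^^ nat (t+1)),
       tau2 n ^^ nat (2*(t+1)),
       (tau2 n ^^ nat (2 * snd x + 1)) \<circ> ss n,
       (tau1 n ^^ nat (2 * fst x + 2)) \<circ> (tau2 n ^^ nat (2 * snd x + 1)) \<circ> (rr n ^^ 2) }"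

definition GS_caseII :: "int \<Rightarrow> int \<times> int \<Rightarrow> int \<times> int \<Rightarrow> (grid \<Rightarrow> grid) set" where
  "GS_caseII n ab x = generated
     { (tau1 n ^^ nat (fst ab)) \<circ> (tau2 n ^^ nat (snd ab)),
       (tau1 n ^^ nat (2 * fst x + 2)) \<circ> (tau2 n ^^ nat (2 * snd x + 1)) \<circ> (rr n ^^ 2) }"

definition class_orbit :: "int \<Rightarrow> (grid \<Rightarrow> grid) set \<Rightarrow> grid \<Rightarrow> grid set set" where
  "class_orbit n G S = {relabel_class n (g S) | g. g \<in> G}"

end

theory Submission
  imports Defs "HOL-Algebra.Group_Action" "HOL-Algebra.Multiplicative_Group"
begin

(* All maps in G_S are affine maps (i, j) |-> (s1 i + a, s2 j + b) of Z_n^2 with signs s1, s2,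
   acting on grids by pullback; on relabeling classes the generated group therefore acts through
   a subgroup H of the finite affine group, and by orbit-stabilizer every orbit size divides |H|.
   In Case I, H lies in the group of maps whose translation part, corrected by a fixed offset
   for each of the four sign patterns, lies in the code <(m, m), (0, 2m)> (m = t + 1) of size n;
   that group has 4n elements.  In Case II, H is generated by a translation p, of order dividing
   n, and a half-turn r that inverts every translation, so H = <p> \<union> <p> r has order dividing 2n. *)

section \<open>The affine group of Z_n^2\<close>

(* (s1, s2, a, b) stands for the map (i, j) |-> (s1 i + a, s2 j + b); grids are pulled back along
   it, so affine_mult p q is p followed by q on positions and aff_act is a homomorphism. *)
type_synonym affine = "int \<times> int \<times> int \<times> int"

definition aff :: "int \<Rightarrow> int \<Rightarrow> int \<Rightarrow> int \<Rightarrow> int \<Rightarrow> affine" where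
  "aff n s1 s2 a b = (s1, s2, a mod n, b mod n)"

definition affine_mult :: "int \<Rightarrow> affine \<Rightarrow> affine \<Rightarrow> affine" where
  "affine_mult n p q = (case p of (s1, s2, a, b) \<Rightarrow> case q of (s1', s2', a', b') \<Rightarrow>
     aff n (s1 * s1') (s2 * s2') (s1' * a + a') (s2' * b + b'))"

definition affine_group :: "int \<Rightarrow> affine monoid" where
  "affine_group n = \<lparr>carrier = {-1, 1} \<times> {-1, 1} \<times> {0..<n} \<times> {0..<n},
     mult = affine_mult n, one = (1, 1, 0, 0)\<rparr>"

lemma carrier_affine_group:
  "carrier (affine_group n) = {-1, 1} \<times> {-1, 1} \<times> {0..<n} \<times> {0..<n}"
  by (simp add: affine_group_def)

lemma affine_group_simps [simp]:
  "mult (affine_group n) = affine_mult n"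
  "one (affine_group n) = aff n 1 1 0 0"
  by (simp_all add: affine_group_def aff_def)

lemma affine_mult_aff [simp]:
  "affine_mult n (aff n s1 s2 a b) (aff n s1' s2' a' b') =
     aff n (s1 * s1') (s2 * s2') (s1' * a + a') (s2' * b + b')"
proof -
  have mod_eq: "(s * (a mod n) + c mod n) mod n = (s * a + c) mod n" for s a c :: int
    by (intro mod_add_cong mod_mult_cong) simp_all
  then show ?thesis unfolding affine_mult_def aff_def by (simp only: prod.case mod_eq)
qed

lemma aff_in_carrier [simp]:
  "n > 0 \<Longrightarrow> aff n s1 s2 a b \<in> carrier (affine_group n) \<longleftrightarrow> s1 \<in> {-1, 1} \<and> s2 \<in> {-1, 1}"
  by (auto simp: aff_def carrier_affine_group)

lemma affine_group_carrierE:
  assumes "p \<in> carrier (affine_group n)"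
  obtains s1 s2 a b where "p = aff n s1 s2 a b" "s1 \<in> {-1, 1}" "s2 \<in> {-1, 1}"
proof -
  obtain s1 s2 a b where "p = (s1, s2, a, b)" by (cases p) auto
  with assms show thesis by (intro that[of s1 s2 a b]) (auto simp: aff_def carrier_affine_group)
qed

lemma group_affine_group: assumes "n > 0" shows "group (affine_group n)"
proof (rule groupI)
  fix p q assume "p \<in> carrier (affine_group n)" "q \<in> carrier (affine_group n)"
  then show "p \<otimes>\<^bsub>affine_group n\<^esub> q \<in> carrier (affine_group n)"
    by (elim affine_group_carrierE) (use assms in auto)
next
  show "\<one>\<^bsub>affine_group n\<^esub> \<in> carrier (affine_group n)" using assms by simp
next
  fix p q r assume "p \<in> carrier (affine_group n)" "q \<in> carrier (affine_group n)"
    "r \<in> carrier (affine_group n)"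
  then show "p \<otimes>\<^bsub>affine_group n\<^esub> q \<otimes>\<^bsub>affine_group n\<^esub> r =
      p \<otimes>\<^bsub>affine_group n\<^esub> (q \<otimes>\<^bsub>affine_group n\<^esub> r)"
    by (elim affine_group_carrierE) (simp add: algebra_simps)
next
  fix p assume "p \<in> carrier (affine_group n)"
  then show "\<one>\<^bsub>affine_group n\<^esub> \<otimes>\<^bsub>affine_group n\<^esub> p = p"
    by (elim affine_group_carrierE) simp
next
  fix p assume "p \<in> carrier (affine_group n)"
  then show "\<exists>q\<in>carrier (affine_group n). q \<otimes>\<^bsub>affine_group n\<^esub> p = \<one>\<^bsub>affine_group n\<^esub>"
  proof (elim affine_group_carrierE)
    fix s1 s2 a b assume p: "p = aff n s1 s2 a b" and s: "s1 \<in> {-1, 1}" "s2 \<in> {-1, 1}"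
    show ?thesis
      by (rule bexI[of _ "aff n s1 s2 (- s1 * a) (- s2 * b)"]) (use s assms in \<open>auto simp: p\<close>)
  qed
qed

lemma inv_aff:
  assumes "n > 0" "s1 \<in> {-1, 1}" "s2 \<in> {-1, 1}"
  shows "inv\<^bsub>affine_group n\<^esub> aff n s1 s2 a b = aff n s1 s2 (- s1 * a) (- s2 * b)"
  by (rule group.inv_equality[OF group_affine_group]) (use assms in auto)

lemma aff_translation_pow:
  "aff n 1 1 a b [^]\<^bsub>affine_group n\<^esub> (k :: nat) = aff n 1 1 (int k * a) (int k * b)"
  by (induction k) (simp_all add: algebra_simps)

definition aff_act :: "int \<Rightarrow> affine \<Rightarrow> grid \<Rightarrow> grid" where
  "aff_act n p A = (case p of (s1, s2, a, b) \<Rightarrow>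
     (\<lambda>(i, j). if (i, j) \<in> Zn2 n then A ((s1 * i + a) mod n, (s2 * j + b) mod n) else 0))"

lemma aff_act_aff:
  "aff_act n (aff n s1 s2 a b) A (i, j) =
     (if (i, j) \<in> Zn2 n then A ((s1 * i + a) mod n, (s2 * j + b) mod n) else 0)"
  by (simp add: aff_act_def aff_def mod_add_right_eq)

lemma mod_affine_compose:
  "(s' * ((s * i + a) mod n) + a') mod n = (s * s' * i + (s' * a + a') mod n) mod (n :: int)"
proof -
  have "(s' * ((s * i + a) mod n) + a') mod n = (s' * (s * i + a) + a') mod n"
    by (rule mod_add_cong[OF mod_mult_cong]) simp_all
  also have "\<dots> = (s * s' * i + (s' * a + a') mod n) mod n"
    by (simp add: mod_add_right_eq algebra_simps)
  finally show ?thesis .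
qed

lemma aff_act_mult:
  assumes "n > 0"
  shows "aff_act n (affine_mult n p q) = aff_act n p \<circ> aff_act n q"
proof (intro ext)
  fix A and ij :: "int \<times> int"
  obtain s1 s2 a b s1' s2' a' b' i j
    where "p = (s1, s2, a, b)" "q = (s1', s2', a', b')" "ij = (i, j)"
    by (cases p, cases q, cases ij) auto
  then show "aff_act n (affine_mult n p q) A ij = (aff_act n p \<circ> aff_act n q) A ij"
    using assms by (simp add: aff_act_def affine_mult_def aff_def Zn2_def mod_affine_compose)
qed

lemma relabel_aff_act: "relabel n \<sigma> (aff_act n p A) = aff_act n p (relabel n \<sigma> A)"
proof (intro ext)
  fix ij :: "int \<times> int"
  show "relabel n \<sigma> (aff_act n p A) ij = aff_act n p (relabel n \<sigma> A) ij"
    by (cases p, cases ij, cases "n > 0") (auto simp: relabel_def aff_act_def Zn2_def)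
qed

lemma relabel_class_aff_act:
  "relabel_class n (aff_act n p A) = aff_act n p ` relabel_class n A"
  unfolding relabel_class_def by (auto simp: relabel_aff_act)

lemma relabel_class_aff_act_one:
  "relabel_class n (aff_act n (aff n 1 1 0 0) A) = relabel_class n A"
proof -
  have "relabel n \<sigma> (aff_act n (aff n 1 1 0 0) A) = relabel n \<sigma> A" for \<sigma>
    by (auto simp: relabel_def aff_act_aff Zn2_def)
  then show ?thesis by (simp add: relabel_class_def)
qed

lemma aff_act_one_relabel_class:
  "aff_act n (aff n 1 1 0 0) ` relabel_class n A = relabel_class n A"
  by (simp add: relabel_class_aff_act[symmetric] relabel_class_aff_act_one)

lemma mod_reflect: "(n - 1 - j) mod n = (- j - 1) mod (n :: int)"
  using mod_add_self2[of "- j - 1" n] by (simp add: algebra_simps)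

lemma tau1_eq_aff_act: "tau1 n = aff_act n (aff n 1 1 (-1) 0)"
  by (intro ext) (auto simp: tau1_def aff_act_aff)

lemma tau2_eq_aff_act: "tau2 n = aff_act n (aff n 1 1 0 (-1))"
  by (intro ext) (auto simp: tau2_def aff_act_aff)

lemma ss_eq_aff_act: "ss n = aff_act n (aff n 1 (-1) 0 (-1))"
  by (intro ext) (auto simp: ss_def aff_act_aff mod_reflect)

lemma rr_square_eq_aff_act: "rr n ^^ 2 = aff_act n (aff n (-1) (-1) (-1) (-1))"
proof (intro ext)
  fix A and ij :: "int \<times> int"
  show "(rr n ^^ 2) A ij = aff_act n (aff n (-1) (-1) (-1) (-1)) A ij"
  proof (cases ij)
    case (Pair i j)
    have "(- k - 1) mod n = n - 1 - k" if "0 \<le> k" "k < n" for k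
      using that mod_reflect[of n k] by simp
    then show ?thesis by (auto simp: Pair rr_def aff_act_aff numeral_2_eq_2 Zn2_def)
  qed
qed

lemma (in group) inv_eq_pow_order:
  assumes "finite (carrier G)" "x \<in> carrier G"
  shows "inv x = x [^] (order G - 1)"
proof (rule inv_equality)
  have "order G > 0"
    using assms by (auto simp: order_def card_gt_0_iff)
  then show "x [^] (order G - 1) \<otimes> x = \<one>"
    using pow_order_eq_1[OF assms(2)] by (metis Suc_diff_1 nat_pow_Suc)
qed (use assms in auto)

lemma (in group) finite_subgroupI:
  assumes fin: "finite (carrier G)" and H: "H \<subseteq> carrier G" "\<one> \<in> H"
    and mult_closed: "\<And>x y. x \<in> H \<Longrightarrow> y \<in> H \<Longrightarrow> x \<otimes> y \<in> H"
  shows "subgroup H G"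
proof (rule subgroupI)
  fix x assume x: "x \<in> H"
  have "x [^] k \<in> H" for k :: nat
    by (induction k) (use H x mult_closed in auto)
  then show "inv x \<in> H"
    using inv_eq_pow_order[OF fin] x H(1) by auto
qed (use assms in auto)

lemma (in group) card_subgroup_dvd:
  assumes "subgroup H G" "subgroup K G" "H \<subseteq> K"
  shows "card H dvd card K"
proof -
  have "card (rcosets\<^bsub>G\<lparr>carrier := K\<rparr>\<^esub> H) * card H = card K"
    using group.lagrange[OF subgroup_imp_group[OF assms(2)] subgroup_incl[OF assms]]
    by (simp add: order_def)
  then show ?thesis by (metis dvd_triv_right)
qed

lemma (in group) subgroup_Un_rcos:
  assumes fin: "finite (carrier G)" and T: "subgroup T G"
    and r: "r \<in> carrier G" "r \<otimes> r \<in> T" and conj: "\<And>h. h \<in> T \<Longrightarrow> r \<otimes> h \<otimes> inv r \<in> T"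
  shows "subgroup (T \<union> (T #> r)) G"
proof (rule finite_subgroupI[OF fin])
  interpret T: subgroup T G by (rule T)
  have swap: "\<exists>c\<in>T. r \<otimes> h = c \<otimes> r" if "h \<in> T" for h
    using T.mem_carrier[OF that] r conj[OF that]
    by (intro bexI[of _ "r \<otimes> h \<otimes> inv r"]) (simp_all add: m_assoc)
  show "T \<union> (T #> r) \<subseteq> carrier G"
    using r_coset_subset_G[OF T.subset r(1)] T.subset by blast
  show "\<one> \<in> T \<union> (T #> r)" by simp
  fix x y assume "x \<in> T \<union> (T #> r)" "y \<in> T \<union> (T #> r)"
  then consider "x \<in> T" "y \<in> T"
    | h where "x \<in> T" "h \<in> T" "y = h \<otimes> r"
    | h where "h \<in> T" "x = h \<otimes> r" "y \<in> T"
    | h h' where "h \<in> T" "x = h \<otimes> r" "h' \<in> T" "y = h' \<otimes> r"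
    unfolding r_coset_def by blast
  then show "x \<otimes> y \<in> T \<union> (T #> r)"
  proof cases
    case 1
    then show ?thesis by simp
  next
    case (2 h)
    then have "x \<otimes> y = (x \<otimes> h) \<otimes> r" using r by (simp add: m_assoc T.mem_carrier)
    then show ?thesis using 2 by (auto simp: r_coset_def)
  next
    case (3 h)
    then obtain c where "c \<in> T" "r \<otimes> y = c \<otimes> r" using swap by blast
    with 3 have "x \<otimes> y = (h \<otimes> c) \<otimes> r" using r by (simp add: m_assoc T.mem_carrier)
    then show ?thesis using 3 \<open>c \<in> T\<close> by (auto simp: r_coset_def)
  next
    case (4 h h')
    then obtain c where c: "c \<in> T" "r \<otimes> h' = c \<otimes> r" using swap by blast
    have "x \<otimes> y = h \<otimes> (r \<otimes> h') \<otimes> r" using 4 r by (simp add: m_assoc T.mem_carrier)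
    also have "\<dots> = (h \<otimes> c) \<otimes> (r \<otimes> r)" using 4 c r by (simp add: m_assoc T.mem_carrier)
    finally show ?thesis using 4 \<open>c \<in> T\<close> r by simp
  qed
qed

lemma (in group) card_Un_rcos_dvd:
  assumes fin: "finite (carrier G)" and T: "subgroup T G" and r: "r \<in> carrier G"
  shows "card (T \<union> (T #> r)) dvd 2 * card T"
proof (cases "r \<in> T")
  case True
  then show ?thesis using subgroup.rcos_const[OF T is_group] by simp
next
  case False
  interpret T: subgroup T G by (rule T)
  have "T \<inter> (T #> r) = {}"
  proof (intro equals0I)
    fix x assume "x \<in> T \<inter> (T #> r)"
    then obtain h where "x \<in> T" "h \<in> T" "x = h \<otimes> r" unfolding r_coset_def by blast
    then have "r = inv h \<otimes> x" using r by (simp add: inv_solve_left)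
    then show False using False \<open>x \<in> T\<close> \<open>h \<in> T\<close> by simp
  qed
  moreover have "card (T #> r) = card T"
    using card_rcosets_equal[OF rcosetsI[OF T.subset r] T.subset] by simp
  moreover have "finite T" "finite (T #> r)"
    using fin T.subset r_coset_subset_G[OF T.subset r] finite_subset by blast+
  ultimately show ?thesis by (simp add: card_Un_disjoint mult_2)
qed

section \<open>From generated maps to subgroups of the affine group\<close>

(* Stated on relabeling classes: aff_act n (aff n 1 1 0 0) is not the identity on arbitrary
   grids, since it resets all entries outside Z_n^2. *)
definition induces :: "int \<Rightarrow> (grid \<Rightarrow> grid) \<Rightarrow> affine \<Rightarrow> bool" where
  "induces n g p \<longleftrightarrow> (\<forall>A. relabel_class n (g A) = aff_act n p ` relabel_class n A)"

lemma induces_aff_act: "induces n (aff_act n p) p"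
  by (simp add: induces_def relabel_class_aff_act)

lemma induces_comp:
  "n > 0 \<Longrightarrow> induces n g p \<Longrightarrow> induces n h q \<Longrightarrow> induces n (g \<circ> h) (affine_mult n p q)"
  by (simp add: induces_def aff_act_mult image_comp)

lemma induces_funpow:
  assumes "n > 0" "induces n g p"
  shows "induces n (g ^^ k) (p [^]\<^bsub>affine_group n\<^esub> k)"
proof (induction k)
  case 0
  show ?case by (simp add: induces_def aff_act_one_relabel_class)
next
  case (Suc k)
  have "p [^]\<^bsub>affine_group n\<^esub> Suc k = affine_mult n (p [^]\<^bsub>affine_group n\<^esub> k) p"
    by simp
  then show ?case
    unfolding funpow_Suc_right by (simp only:) (rule induces_comp[OF assms(1) Suc assms(2)])
qed

lemma generated_induces:
  assumes "n > 0" "\<forall>g\<in>Gens. \<exists>p\<in>P. induces n g p" "g \<in> generated Gens"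
  shows "\<exists>p\<in>generate (affine_group n) P. induces n g p"
  using assms(3)
proof (induction rule: generated.induct)
  case gen_id
  have "induces n id (aff n 1 1 0 0)"
    by (simp add: induces_def aff_act_one_relabel_class)
  moreover have "aff n 1 1 0 0 \<in> generate (affine_group n) P"
    using generate.one[of "affine_group n" P] by simp
  ultimately show ?case by blast
next
  case (gen_comp g h)
  obtain p q where "p \<in> P" "induces n g p" "q \<in> generate (affine_group n) P" "induces n h q"
    using assms(2) gen_comp by blast
  moreover have "p \<otimes>\<^bsub>affine_group n\<^esub> q \<in> generate (affine_group n) P"
    by (rule generate.eng[OF generate.incl]) fact+
  ultimately show ?case
    using induces_comp[OF assms(1)] by (simp del: comp_apply) blast
qed

lemma generated_comp:
  "g \<in> generated Gens \<Longrightarrow> h \<in> generated Gens \<Longrightarrow> g \<circ> h \<in> generated Gens"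
  by (induction g rule: generated.induct) (auto simp: comp_assoc intro: generated.intros)

lemma generated_funpow: "g \<in> Gens \<Longrightarrow> g ^^ k \<in> generated Gens"
  by (induction k) (auto simp: funpow_Suc_right[symmetric] intro: generated.intros)

lemma generate_induced:
  assumes n: "n > 0" and P: "P \<subseteq> carrier (affine_group n)"
    and induced: "\<forall>p\<in>P. \<exists>g\<in>Gens. induces n g p" and p: "p \<in> generate (affine_group n) P"
  shows "\<exists>g\<in>generated Gens. induces n g p"
  using p
proof (induction rule: generate.induct)
  case one
  have "induces n id (aff n 1 1 0 0)"
    by (simp add: induces_def aff_act_one_relabel_class)
  then show ?case using generated.gen_id by auto
next
  case (incl p)
  then show ?case
    using induced generated.gen_comp[OF _ generated.gen_id] by fastforce
next
  case (inv p)
  \<comment> \<open>generated only builds a monoid, but in a finite group an inverse is a power\<close>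
  interpret group "affine_group n" using group_affine_group[OF n] .
  have "finite (carrier (affine_group n))" by (simp add: carrier_affine_group)
  then have "inv\<^bsub>affine_group n\<^esub> p = p [^]\<^bsub>affine_group n\<^esub> (order (affine_group n) - 1)"
    using inv_eq_pow_order inv P by blast
  moreover obtain g where "g \<in> Gens" "induces n g p"
    using inv induced by blast
  ultimately show ?case
    using induces_funpow[OF n] generated_funpow by (simp del: comp_apply) blast
next
  case (eng p q)
  then obtain g h where "g \<in> generated Gens" "induces n g p" "h \<in> generated Gens" "induces n h q"
    by blast
  then show ?case
    using induces_comp[OF n] generated_comp by (simp del: comp_apply) blast
qed

lemma class_orbit_generated:
  assumes n: "n > 0" and P: "P \<subseteq> carrier (affine_group n)"
    and "\<forall>g\<in>Gens. \<exists>p\<in>P. induces n g p" "\<forall>p\<in>P. \<exists>g\<in>Gens. induces n g p"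
  shows "class_orbit n (generated Gens) S =
    (\<lambda>p. aff_act n p ` relabel_class n S) ` generate (affine_group n) P"
proof (intro equalityI subsetI)
  fix c assume "c \<in> class_orbit n (generated Gens) S"
  then obtain g where "g \<in> generated Gens" "c = relabel_class n (g S)"
    by (auto simp: class_orbit_def)
  moreover obtain p where "p \<in> generate (affine_group n) P" "induces n g p"
    using generated_induces[OF n assms(3)] \<open>g \<in> generated Gens\<close> by blast
  ultimately show "c \<in> (\<lambda>p. aff_act n p ` relabel_class n S) ` generate (affine_group n) P"
    unfolding induces_def by blast
next
  fix c assume "c \<in> (\<lambda>p. aff_act n p ` relabel_class n S) ` generate (affine_group n) P"
  then obtain p where "p \<in> generate (affine_group n) P" "c = aff_act n p ` relabel_class n S"
    by auto
  moreover obtain g where "g \<in> generated Gens" "induces n g p"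
    using generate_induced[OF n P assms(4)] \<open>p \<in> generate (affine_group n) P\<close> by blast
  ultimately show "c \<in> class_orbit n (generated Gens) S"
    unfolding induces_def class_orbit_def by blast
qed

lemma group_action_restrict:
  fixes G (structure)
  assumes "group G"
    and closed: "\<And>g x. g \<in> carrier G \<Longrightarrow> x \<in> E \<Longrightarrow> f g x \<in> E"
    and one: "\<And>x. x \<in> E \<Longrightarrow> f \<one>\<^bsub>G\<^esub> x = x"
    and mult: "\<And>g h x. g \<in> carrier G \<Longrightarrow> h \<in> carrier G \<Longrightarrow> x \<in> E \<Longrightarrow>
      f (g \<otimes>\<^bsub>G\<^esub> h) x = f g (f h x)"
  shows "group_action G E (\<lambda>g. restrict (f g) E)"
proof -
  interpret group G by fact
  have Bij: "restrict (f g) E \<in> Bij E" if g: "g \<in> carrier G" for g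
  proof -
    have "bij_betw (f g) E E"
      by (rule bij_betw_byWitness[where f' = "f (inv g)"])
         (use g closed in \<open>auto simp: mult[symmetric] one\<close>)
    then show ?thesis by (simp add: Bij_def bij_betw_restrict_eq)
  qed
  have "restrict (f g) E \<otimes>\<^bsub>BijGroup E\<^esub> restrict (f h) E = restrict (f (g \<otimes> h)) E"
    if "g \<in> carrier G" "h \<in> carrier G" for g h
    using that Bij closed by (auto simp: BijGroup_def compose_def mult)
  then have "(\<lambda>g. restrict (f g) E) \<in> hom G (BijGroup E)"
    using Bij by (intro homI) (auto simp: BijGroup_def)
  then show ?thesis
    by (simp add: group_action_def group_hom_def group_hom_axioms_def group_BijGroup
      is_group)
qed

lemma card_relabel_class_orbit_dvd:
  assumes n: "n > 0" and H: "subgroup H (affine_group n)"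
  shows "card ((\<lambda>p. aff_act n p ` relabel_class n S) ` H) dvd card H"
proof -
  interpret group "affine_group n" using group_affine_group[OF n] .
  let ?H = "affine_group n\<lparr>carrier := H\<rparr>" and ?E = "range (relabel_class n)"
  let ?\<phi> = "\<lambda>p. restrict ((`) (aff_act n p)) ?E"
  have action: "group_action ?H ?E ?\<phi>"
  proof (rule group_action_restrict)
    show "group ?H" using subgroup_imp_group[OF H] .
    show "aff_act n p ` c \<in> ?E" if "c \<in> ?E" for p c
      using that by (auto simp: relabel_class_aff_act[symmetric])
    show "aff_act n \<one>\<^bsub>?H\<^esub> ` c = c" if "c \<in> ?E" for c
      using that aff_act_one_relabel_class by auto
    show "aff_act n (p \<otimes>\<^bsub>?H\<^esub> q) ` c = aff_act n p ` aff_act n q ` c" for p q c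
      by (simp add: aff_act_mult[OF n] image_comp)
  qed
  have "card (orbit ?H ?\<phi> (relabel_class n S)) * card (stabilizer ?H ?\<phi> (relabel_class n S))
      = card H"
    using group_action.orbit_stabilizer_theorem[OF action, of "relabel_class n S"]
    by (simp add: order_def)
  moreover have "orbit ?H ?\<phi> (relabel_class n S) = (\<lambda>p. aff_act n p ` relabel_class n S) ` H"
    by (auto simp: orbit_def)
  ultimately show ?thesis by (metis dvd_triv_left)
qed

lemma card_class_orbit_dvd_subgroup:
  assumes n: "n > 0" and P: "P \<subseteq> K" and K: "subgroup K (affine_group n)"
    and "\<forall>g\<in>Gens. \<exists>p\<in>P. induces n g p" "\<forall>p\<in>P. \<exists>g\<in>Gens. induces n g p"
  shows "card (class_orbit n (generated Gens) S) dvd card K"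
proof -
  interpret group "affine_group n" using group_affine_group[OF n] .
  have P_carrier: "P \<subseteq> carrier (affine_group n)" using P subgroup.subset[OF K] by blast
  have "card (class_orbit n (generated Gens) S) dvd card (generate (affine_group n) P)"
    unfolding class_orbit_generated[OF n P_carrier assms(4,5)]
    by (rule card_relabel_class_orbit_dvd[OF n generate_is_subgroup[OF P_carrier]])
  also have "card (generate (affine_group n) P) dvd card K"
    by (rule card_subgroup_dvd[OF generate_is_subgroup[OF P_carrier] K
          generate_subgroup_incl[OF P K]])
  finally show ?thesis .
qed

lemma induces_tau1_pow:
  assumes "n > 0" shows "induces n (tau1 n ^^ k) (aff n 1 1 (- int k) 0)"
proof -
  have "induces n (aff_act n (aff n 1 1 (-1) 0) ^^ k) (aff n 1 1 (-1) 0 [^]\<^bsub>affine_group n\<^esub> k)"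
    by (rule induces_funpow[OF assms induces_aff_act])
  then show ?thesis by (simp add: tau1_eq_aff_act aff_translation_pow)
qed

lemma induces_tau2_pow:
  assumes "n > 0" shows "induces n (tau2 n ^^ k) (aff n 1 1 0 (- int k))"
proof -
  have "induces n (aff_act n (aff n 1 1 0 (-1)) ^^ k) (aff n 1 1 0 (-1) [^]\<^bsub>affine_group n\<^esub> k)"
    by (rule induces_funpow[OF assms induces_aff_act])
  then show ?thesis by (simp add: tau2_eq_aff_act aff_translation_pow)
qed

lemma induces_translation:
  "n > 0 \<Longrightarrow> induces n ((tau1 n ^^ k) \<circ> (tau2 n ^^ l)) (aff n 1 1 (- int k) (- int l))"
  using induces_comp[OF _ induces_tau1_pow induces_tau2_pow] by simp

lemma induces_reflection:
  assumes "n > 0" "x2 \<ge> 0"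
  shows "induces n ((tau2 n ^^ nat (2 * x2 + 1)) \<circ> ss n) (aff n 1 (-1) 0 (2 * x2))"
  using induces_comp[OF assms(1) induces_tau2_pow[OF assms(1)] induces_aff_act,
      of "nat (2 * x2 + 1)" "aff n 1 (-1) 0 (-1)"]
  using assms by (simp add: ss_eq_aff_act)

lemma induces_half_turn:
  assumes "n > 0" "x1 \<ge> 0" "x2 \<ge> 0"
  shows "induces n ((tau1 n ^^ nat (2 * x1 + 2)) \<circ> (tau2 n ^^ nat (2 * x2 + 1)) \<circ> (rr n ^^ 2))
    (aff n (-1) (-1) (2 * x1 + 1) (2 * x2))"
  using induces_comp[OF assms(1) induces_translation[OF assms(1)] induces_aff_act,
      of "nat (2 * x1 + 2)" "nat (2 * x2 + 1)" "aff n (-1) (-1) (-1) (-1)"]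
  using assms by (simp add: rr_square_eq_aff_act add.commute)

section \<open>Case I\<close>

definition reflection_offset :: "int \<Rightarrow> int \<Rightarrow> int" where
  "reflection_offset c s = (if s = 1 then 0 else c)"

lemma reflection_offset_mult:
  "s \<in> {-1, 1} \<Longrightarrow> s' \<in> {-1, 1} \<Longrightarrow>
    reflection_offset c (s * s') = s' * reflection_offset c s + reflection_offset c s'"
  by (auto simp: reflection_offset_def)

definition caseI_lattice :: "int \<Rightarrow> int \<Rightarrow> int \<Rightarrow> bool" where
  "caseI_lattice m u v \<longleftrightarrow> m dvd u \<and> 2 * m dvd v - u"

lemma caseI_lattice_cong:
  assumes "2 * m dvd n" "n dvd u - u'" "n dvd v - v'"
  shows "caseI_lattice m u v \<longleftrightarrow> caseI_lattice m u' v'"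
proof -
  have uu': "2 * m dvd u - u'" and vv': "2 * m dvd v - v'"
    using assms dvd_trans by blast+
  from uu' have "m dvd u - u'" by (rule dvd_mult_right)
  moreover have "2 * m dvd (v - u) - (v' - u')"
    using dvd_diff[OF vv' uu'] by (simp add: algebra_simps)
  ultimately show ?thesis
    using dvd_add_right_iff[of m "u - u'" u']
      dvd_add_right_iff[of "2 * m" "(v - u) - (v' - u')" "v' - u'"]
    by (simp add: caseI_lattice_def)
qed

lemma caseI_lattice_mult:
  assumes uv: "caseI_lattice m u v" and uv': "caseI_lattice m u' v'"
    and s: "s \<in> {-1, 1}" "s' \<in> {-1, 1}"
  shows "caseI_lattice m (s * u + u') (s' * v + v')"
proof -
  have "2 dvd s' - s" using s by auto
  then have "2 * m dvd s' * (v - u) + (s' - s) * u + (v' - u')"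
    using uv uv' by (intro dvd_add) (auto simp: caseI_lattice_def mult_dvd_mono)
  moreover have "(s' * v + v') - (s * u + u') = s' * (v - u) + (s' - s) * u + (v' - u')"
    by (simp add: algebra_simps)
  moreover have "m dvd s * u + u'"
    using uv uv' by (simp add: caseI_lattice_def)
  ultimately show ?thesis
    unfolding caseI_lattice_def by argo
qed

(* The offsets are the translation parts of the reflection tau2^(2 x2 + 1) s and of the
   half-turn tau1^(2 x1 + 2) tau2^(2 x2 + 1) r^2, so that both lie in the group. *)
definition caseI_group :: "int \<Rightarrow> int \<Rightarrow> int \<times> int \<Rightarrow> affine set" where
  "caseI_group n m x = {(s1, s2, a, b) \<in> carrier (affine_group n).
     caseI_lattice m (a - reflection_offset (2 * fst x + 1) s1)
       (b - reflection_offset (2 * snd x) s2)}"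

lemma aff_in_caseI_group:
  assumes "n > 0" "2 * m dvd n"
  shows "aff n s1 s2 a b \<in> caseI_group n m x \<longleftrightarrow> s1 \<in> {-1, 1} \<and> s2 \<in> {-1, 1} \<and>
    caseI_lattice m (a - reflection_offset (2 * fst x + 1) s1)
      (b - reflection_offset (2 * snd x) s2)"
proof -
  have "n dvd (a mod n - c) - (a - c)" for a c :: int
    by (simp add: mod_eq_dvd_iff[symmetric] mod_diff_left_eq)
  then have "caseI_lattice m (a mod n - reflection_offset (2 * fst x + 1) s1)
      (b mod n - reflection_offset (2 * snd x) s2) \<longleftrightarrow>
    caseI_lattice m (a - reflection_offset (2 * fst x + 1) s1)
      (b - reflection_offset (2 * snd x) s2)"
    by (intro caseI_lattice_cong[OF assms(2)])
  then show ?thesis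
    using assms(1) by (simp add: caseI_group_def aff_def carrier_affine_group)
qed

lemma subgroup_caseI_group:
  assumes n: "n > 0" and m: "2 * m dvd n"
  shows "subgroup (caseI_group n m x) (affine_group n)"
proof -
  interpret group "affine_group n" using group_affine_group[OF n] .
  note mem = aff_in_caseI_group[OF n m]
  show ?thesis
  proof (rule finite_subgroupI)
    show "finite (carrier (affine_group n))" by (simp add: carrier_affine_group)
    show "caseI_group n m x \<subseteq> carrier (affine_group n)" by (auto simp: caseI_group_def)
    show "\<one>\<^bsub>affine_group n\<^esub> \<in> caseI_group n m x"
      by (simp add: mem reflection_offset_def caseI_lattice_def)
  next
    fix p q assume pq: "p \<in> caseI_group n m x" "q \<in> caseI_group n m x"
    then have "p \<in> carrier (affine_group n)" "q \<in> carrier (affine_group n)"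
      by (auto simp: caseI_group_def)
    then obtain s1 s2 a b s1' s2' a' b' where
      p: "p = aff n s1 s2 a b" and q: "q = aff n s1' s2' a' b'"
      by (metis affine_group_carrierE)
    let ?o1 = "reflection_offset (2 * fst x + 1)" and ?o2 = "reflection_offset (2 * snd x)"
    have s: "s1 \<in> {-1, 1}" "s2 \<in> {-1, 1}" "s1' \<in> {-1, 1}" "s2' \<in> {-1, 1}"
      and "caseI_lattice m (a - ?o1 s1) (b - ?o2 s2)"
        "caseI_lattice m (a' - ?o1 s1') (b' - ?o2 s2')"
      using pq by (simp_all add: p q mem)
    then have "caseI_lattice m (s1' * (a - ?o1 s1) + (a' - ?o1 s1'))
        (s2' * (b - ?o2 s2) + (b' - ?o2 s2'))"
      by (intro caseI_lattice_mult)
    moreover have "s1' * (a - ?o1 s1) + (a' - ?o1 s1') = s1' * a + a' - ?o1 (s1 * s1')"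
      "s2' * (b - ?o2 s2) + (b' - ?o2 s2') = s2' * b + b' - ?o2 (s2 * s2')"
      by (simp_all only: reflection_offset_mult[OF s(1,3)] reflection_offset_mult[OF s(2,4)])
         (simp_all add: algebra_simps)
    ultimately show "p \<otimes>\<^bsub>affine_group n\<^esub> q \<in> caseI_group n m x"
      using s by (auto simp: p q mem)
  qed
qed

lemma card_multiples_in_interval:
  fixes d q r :: int
  assumes "d > 0" "q \<ge> 0"
  shows "card {z \<in> {0..<d * q}. d dvd z - r} = nat q"
proof -
  have "{z \<in> {0..<d * q}. d dvd z - r} = (\<lambda>k. d * k + r mod d) ` {0..<q}"
  proof (intro equalityI subsetI)
    fix z assume z: "z \<in> {z \<in> {0..<d * q}. d dvd z - r}"
    then have "z = d * (z div d) + r mod d"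
      by (metis add.commute mod_eq_dvd_iff mult_div_mod_eq mem_Collect_eq)
    moreover have "z div d \<in> {0..<q}"
    proof -
      have "d * (z div d) + z mod d = z" "0 \<le> z mod d" "z < d * q" using assms z by simp_all
      then have "d * (z div d) < d * q" by linarith
      then show ?thesis using z assms by (simp add: pos_imp_zdiv_nonneg_iff)
    qed
    ultimately show "z \<in> (\<lambda>k. d * k + r mod d) ` {0..<q}" by blast
  next
    fix z assume "z \<in> (\<lambda>k. d * k + r mod d) ` {0..<q}"
    then obtain k where k: "0 \<le> k" "k < q" "z = d * k + r mod d" by auto
    have "d * k + r mod d < d * (k + 1)"
      using pos_mod_bound[OF assms(1), of r] by (simp add: distrib_left)
    also have "\<dots> \<le> d * q" using k assms by (intro mult_left_mono) auto
    finally have "z < d * q" using k by simp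
    moreover have "d dvd z - r"
      using k by (simp add: mod_eq_dvd_iff[symmetric] mod_add_left_eq[symmetric])
    ultimately show "z \<in> {z \<in> {0..<d * q}. d dvd z - r}" using k assms by simp
  qed
  moreover have "inj_on (\<lambda>k. d * k + r mod d) {0..<q}"
    using assms by (auto simp: inj_on_def)
  ultimately show ?thesis by (simp add: card_image)
qed

lemma card_caseI_group:
  assumes m: "m > 0" and n: "n = 2 * m^2"
  shows "card (caseI_group n m x) = 4 * nat n"
proof -
  let ?o1 = "reflection_offset (2 * fst x + 1)" and ?o2 = "reflection_offset (2 * snd x)"
  define A where "A s1 = {a \<in> {0..<m * (2 * m)}. m dvd a - ?o1 s1}" for s1
  define B where "B s1 s2 a = {b \<in> {0..<2 * m * m}. 2 * m dvd (b - ?o2 s2) - (a - ?o1 s1)}"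
    for s1 s2 a
  have n_eq: "m * (2 * m) = n" "2 * m * m = n" using n by (simp_all add: power2_eq_square)
  have "caseI_group n m x = Sigma {-1, 1} (\<lambda>s1. Sigma {-1, 1} (\<lambda>s2. Sigma (A s1) (B s1 s2)))"
    by (auto simp: caseI_group_def carrier_affine_group caseI_lattice_def A_def B_def n_eq)
  moreover have "card (A s1) = nat (2 * m)" for s1
    using card_multiples_in_interval[of m "2 * m"] m by (simp add: A_def)
  moreover have "finite (A s1)" "finite (B s1 s2 a)" for s1 s2 a
    unfolding A_def B_def by (rule finite_subset[of _ "{0..<n}"]; use n_eq in auto)+
  moreover have "card (B s1 s2 a) = nat m" for s1 s2 a
    using card_multiples_in_interval[of "2 * m" m "?o2 s2 + (a - ?o1 s1)"] m
    by (simp add: B_def diff_diff_eq)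
  ultimately have "card (caseI_group n m x) = 2 * (2 * (nat (2 * m) * nat m))"
    by (simp add: card_SigmaI)
  also have "\<dots> = 4 * nat n"
    using m n_eq(1) by (simp flip: n_eq(1) add: nat_mult_distrib)
  finally show ?thesis .
qed

lemma caseI_class_orbit_dvd:
  assumes t: "t \<ge> 0" and n: "n = 2 * (t + 1)^2" and x: "x \<in> Zn2 n"
  shows "card (class_orbit n (GS_caseI n t x) S) dvd 4 * nat n"
proof -
  obtain x1 x2 where x_eq: "x = (x1, x2)" and x12: "0 \<le> x1" "0 \<le> x2"
    using x by (cases x) (auto simp: Zn2_def)
  define m where "m = t + 1"
  have m: "m > 0" "n = 2 * m^2" and n_pos: "n > 0"
    using t n by (auto simp: m_def)
  then have "2 * m dvd n" by (simp add: power2_eq_square)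
  let ?P = "{aff n 1 1 (- m) (- m), aff n 1 1 0 (- 2 * m), aff n 1 (-1) 0 (2 * x2),
    aff n (-1) (-1) (2 * x1 + 1) (2 * x2)}"
  have "induces n ((tau1 n ^^ nat (t + 1)) \<circ> (tau2 n ^^ nat (t + 1))) (aff n 1 1 (- m) (- m))"
    "induces n (tau2 n ^^ nat (2 * (t + 1))) (aff n 1 1 0 (- 2 * m))"
    "induces n ((tau2 n ^^ nat (2 * snd x + 1)) \<circ> ss n) (aff n 1 (-1) 0 (2 * x2))"
    "induces n ((tau1 n ^^ nat (2 * fst x + 2)) \<circ> (tau2 n ^^ nat (2 * snd x + 1)) \<circ> (rr n ^^ 2))
      (aff n (-1) (-1) (2 * x1 + 1) (2 * x2))"
    using induces_translation[OF n_pos, of "nat (t + 1)" "nat (t + 1)"]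
      induces_tau2_pow[OF n_pos, of "nat (2 * (t + 1))"]
      induces_reflection[OF n_pos x12(2)] induces_half_turn[OF n_pos x12] t
    by (simp_all add: m_def x_eq)
  moreover have "?P \<subseteq> caseI_group n m x"
    by (simp add: aff_in_caseI_group[OF n_pos \<open>2 * m dvd n\<close>] x_eq reflection_offset_def
        caseI_lattice_def)
  ultimately have "card (class_orbit n (GS_caseI n t x) S) dvd card (caseI_group n m x)"
    unfolding GS_caseI_def
    using card_class_orbit_dvd_subgroup[OF n_pos _ subgroup_caseI_group[OF n_pos \<open>2 * m dvd n\<close>],
      of ?P] by simp
  then show ?thesis using card_caseI_group[OF m(1,2)] by simp
qed

section \<open>Case II\<close>

definition affine_translations :: "int \<Rightarrow> affine set" where
  "affine_translations n = {aff n 1 1 u v | u v. True}"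

lemma subgroup_affine_translations:
  assumes n: "n > 0" shows "subgroup (affine_translations n) (affine_group n)"
proof -
  interpret group "affine_group n" using group_affine_group[OF n] .
  show ?thesis
  proof (rule finite_subgroupI)
    show "finite (carrier (affine_group n))" by (simp add: carrier_affine_group)
    show "affine_translations n \<subseteq> carrier (affine_group n)"
      using n by (auto simp: affine_translations_def)
    show "\<one>\<^bsub>affine_group n\<^esub> \<in> affine_translations n"
      by (auto simp: affine_translations_def)
  next
    fix p q assume "p \<in> affine_translations n" "q \<in> affine_translations n"
    then obtain u v u' v' where "p = aff n 1 1 u v" "q = aff n 1 1 u' v'"
      unfolding affine_translations_def by blast
    then show "p \<otimes>\<^bsub>affine_group n\<^esub> q \<in> affine_translations n"
      unfolding affine_translations_def by auto
  qed
qed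

lemma card_generate_translation_dvd:
  assumes n: "n > 0"
  shows "card (generate (affine_group n) {aff n 1 1 u v}) dvd nat n"
proof -
  interpret group "affine_group n" using group_affine_group[OF n] .
  have "aff n 1 1 u v [^]\<^bsub>affine_group n\<^esub> nat n = \<one>\<^bsub>affine_group n\<^esub>"
    using n by (simp add: aff_translation_pow) (simp add: aff_def)
  then show ?thesis
    using pow_eq_id generate_pow_card n by (metis aff_in_carrier insertI1 insert_iff)
qed

lemma caseII_class_orbit_dvd:
  assumes n: "n > 0" and x: "x \<in> Zn2 n"
  shows "card (class_orbit n (GS_caseII n (a, b) x) S) dvd 2 * nat n"
proof -
  interpret group "affine_group n" using group_affine_group[OF n] .
  obtain x1 x2 where x_eq: "x = (x1, x2)" and x12: "0 \<le> x1" "0 \<le> x2"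
    using x by (cases x) (auto simp: Zn2_def)
  define p where "p = aff n 1 1 (- int (nat a)) (- int (nat b))"
  define r where "r = aff n (-1) (-1) (2 * x1 + 1) (2 * x2)"
  define T where "T = generate (affine_group n) {p}"
  have p: "p \<in> carrier (affine_group n)" and r: "r \<in> carrier (affine_group n)"
    using n by (simp_all add: p_def r_def)
  have T: "subgroup T (affine_group n)"
    unfolding T_def using generate_is_subgroup p by simp
  have T_translations: "T \<subseteq> affine_translations n"
    unfolding T_def using p_def subgroup_affine_translations[OF n]
    by (intro generate_subgroup_incl) (auto simp: affine_translations_def)
  have "r \<otimes>\<^bsub>affine_group n\<^esub> r \<in> T"
    using subgroup.one_closed[OF T] by (simp add: r_def)
  moreover have "r \<otimes>\<^bsub>affine_group n\<^esub> h \<otimes>\<^bsub>affine_group n\<^esub> inv\<^bsub>affine_group n\<^esub> r \<in> T"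
    if "h \<in> T" for h
  proof -
    obtain u v where h: "h = aff n 1 1 u v"
      using \<open>h \<in> T\<close> T_translations unfolding affine_translations_def by blast
    have "r \<otimes>\<^bsub>affine_group n\<^esub> h \<otimes>\<^bsub>affine_group n\<^esub> inv\<^bsub>affine_group n\<^esub> r =
        inv\<^bsub>affine_group n\<^esub> h"
      using n by (simp add: h r_def inv_aff algebra_simps)
    then show ?thesis using subgroup.m_inv_closed[OF T that] by simp
  qed
  ultimately have K: "subgroup (T \<union> (T #>\<^bsub>affine_group n\<^esub> r)) (affine_group n)"
    using subgroup_Un_rcos[OF _ T r] by (simp add: carrier_affine_group)
  have "{p, r} \<subseteq> T \<union> (T #>\<^bsub>affine_group n\<^esub> r)"
    using rcos_self[OF r T] by (simp add: T_def generate.incl)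
  moreover have "induces n ((tau1 n ^^ nat a) \<circ> (tau2 n ^^ nat b)) p"
    unfolding p_def by (rule induces_translation[OF n])
  moreover have
    "induces n ((tau1 n ^^ nat (2 * fst x + 2)) \<circ> (tau2 n ^^ nat (2 * snd x + 1)) \<circ> (rr n ^^ 2)) r"
    unfolding r_def x_eq by (simp add: induces_half_turn[OF n x12])
  ultimately have "card (class_orbit n (GS_caseII n (a, b) x) S) dvd
      card (T \<union> (T #>\<^bsub>affine_group n\<^esub> r))"
    unfolding GS_caseII_def using card_class_orbit_dvd_subgroup[OF n _ K, of "{p, r}"]
    by simp
  also have "card (T \<union> (T #>\<^bsub>affine_group n\<^esub> r)) dvd 2 * card T"
    using card_Un_rcos_dvd[OF _ T r] by (simp add: carrier_affine_group)
  also have "2 * card T dvd 2 * nat n"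
    using card_generate_translation_dvd[OF n] by (simp add: T_def p_def)
  finally show ?thesis .
qed

theorem mainTheorem5:
  fixes t n :: int and C0 C :: "(int \<times> int) set" and G0 :: "(int \<times> int) list"
    and x :: "int \<times> int" and cw :: "int \<Rightarrow> int \<times> int"
  assumes ht: "t \<ge> 1"
    and hn: "n = 2 * (t+1)^2"
    and hlin: "linear_code n C0"
    and hdp: "t_ec_dp_code n t C0"
    and hG0: "generator_matrix n C0 G0"
    and hx: "x \<in> Zn2 n"
    and hC: "C = translate_code n x C0"
    and hcw: "bij_betw cw {1..n} C"
    and hcase: "caseI n t C0 \<or> caseII n t C0"
  shows "(caseI n t C0 \<longrightarrow>
            (\<forall>S \<in> sudoku_set n t cw. card (class_orbit n (GS_caseI n t x) S) dvd 4 * nat n))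
       \<and> (\<forall>a b. caseII n t C0 \<longrightarrow> G0 = [(a, b)] \<longrightarrow>
            (\<forall>S \<in> sudoku_set n t cw. card (class_orbit n (GS_caseII n (a, b) x) S) dvd 2 * nat n))"
proof -
  \<comment> \<open>the bounds hold for every grid\<close>
  have "n > 0" using ht hn by simp
  then show ?thesis
    using caseI_class_orbit_dvd[OF _ hn hx] caseII_class_orbit_dvd[OF _ hx] ht by simp
qed

end
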